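(* Consider the stochastic quadratic problem in the context, and let $\eta_0,\dots,\eta_T$ be any deterministic learning rates. Run SGD $w_{t+1}=w_t-\eta_t(H(\xi_t)w_t-b(\xi_t))$ for $t=0,\dots,T$ from a deterministic $w_0$. With $P_t=I-\eta_tH$, $$\mathbb{E}\left[(w_{T+1}-w_* )^\top H(w_{T+1}-w_* )\right]=\mathbb{E}\left[(w_0-w_* )^\top P_T\cdots P_0HP_0\cdots P_T(w_0-w_* )\right]+\sum_{\tau=0}^T\mathbb{E}\left[\eta_\tau^2\,n_\tau^\top P_T\cdots P_{\tau+1}HP_{\tau+1}\cdots P_T\,n_\tau\right].$$
   Context: Let $\xi$ be a random data sample, $H(\xi)\in\mathbb{R}^{d\times d}$ a random symmetric matrix and $b(\xi)\in\mathbb{R}^d$ a random vector. Define $f(w,\xi)=\frac12w^\top H(\xi)w-b(\xi)^\top w$ and $f(w)=\mathbb{E}_\xi f(w,\xi)$. Set $H=\mathbb{E}H(\xi)$, assumed positive definite, and $b=\mathbb{E}b(\xi)$, with $w_*=H^{-1}b$. The samples $\xi_0,\xi_1,\dots$ are i.i.d. copies of $\xi$, and $n_t=(Hw_t-b)-(H(\xi_t)w_t-b(\xi_t))$. *)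

theory Defs
  imports "HOL-Probability.Probability"
begin

text \<open>SGD iterate w_t as a function of the sample path omega (omega t = xi_t).\<close>
primrec sgd_iter :: "('s \<Rightarrow> real^'n^'n) \<Rightarrow> ('s \<Rightarrow> real^'n) \<Rightarrow> (nat \<Rightarrow> real)
    \<Rightarrow> real^'n \<Rightarrow> (nat \<Rightarrow> 's) \<Rightarrow> nat \<Rightarrow> real^'n" where
  "sgd_iter Hs bs eta w0 \<omega> 0 = w0"
| "sgd_iter Hs bs eta w0 \<omega> (Suc t) =
     sgd_iter Hs bs eta w0 \<omega> t
     - eta t *\<^sub>R (Hs (\<omega> t) *v sgd_iter Hs bs eta w0 \<omega> t - bs (\<omega> t))"

definition Pmat :: "real^'n^'n \<Rightarrow> (nat \<Rightarrow> real) \<Rightarrow> nat \<Rightarrow> real^'n^'n" where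
  "Pmat H eta t = mat 1 - eta t *\<^sub>R H"

primrec Pprod :: "real^'n^'n \<Rightarrow> (nat \<Rightarrow> real) \<Rightarrow> nat \<Rightarrow> nat \<Rightarrow> real^'n^'n" where
  "Pprod H eta a 0 = mat 1"
| "Pprod H eta a (Suc n) = Pmat H eta (a + n) ** Pprod H eta a n"

primrec Pprod_rev :: "real^'n^'n \<Rightarrow> (nat \<Rightarrow> real) \<Rightarrow> nat \<Rightarrow> nat \<Rightarrow> real^'n^'n" where
  "Pprod_rev H eta a 0 = mat 1"
| "Pprod_rev H eta a (Suc n) = Pprod_rev H eta a n ** Pmat H eta (a + n)"

definition noise :: "('s \<Rightarrow> real^'n^'n) \<Rightarrow> ('s \<Rightarrow> real^'n) \<Rightarrow> real^'n^'n \<Rightarrow> real^'n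
    \<Rightarrow> (nat \<Rightarrow> real) \<Rightarrow> real^'n \<Rightarrow> (nat \<Rightarrow> 's) \<Rightarrow> nat \<Rightarrow> real^'n" where
  "noise Hs bs H b eta w0 \<omega> t =
     (H *v sgd_iter Hs bs eta w0 \<omega> t - b)
     - (Hs (\<omega> t) *v sgd_iter Hs bs eta w0 \<omega> t - bs (\<omega> t))"

end

theory Submission
  imports Defs
begin

text \<open>
  With \<open>e\<^sub>t = w\<^sub>t - w\<^sub>*\<close> and \<open>H w\<^sub>* = b\<close> one SGD step reads
  \<open>e\<^sub>t\<^sub>+\<^sub>1 = P\<^sub>t e\<^sub>t + \<eta>\<^sub>t n\<^sub>t\<close>. The sample \<open>\<xi>\<^sub>t\<close> is independent of
  \<open>\<xi>\<^sub>0, \<dots>, \<xi>\<^sub>t\<^sub>-\<^sub>1\<close>, which determine \<open>e\<^sub>t\<close>, and averaging over \<open>\<xi>\<^sub>t\<close> alone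
  makes \<open>n\<^sub>t\<close> vanish; so the cross term drops out and for every matrix \<open>A\<close>
  \<open>E[e\<^sub>t\<^sub>+\<^sub>1\<^sup>T A e\<^sub>t\<^sub>+\<^sub>1] = E[e\<^sub>t\<^sup>T P\<^sub>t\<^sup>T A P\<^sub>t e\<^sub>t] + \<eta>\<^sub>t\<^sup>2 E[n\<^sub>t\<^sup>T A n\<^sub>t]\<close>.
  Unrolling this recursion from \<open>A = H\<close> gives the formula, once one notes that the \<open>P\<^sub>t\<close>
  are symmetric and commute. All expectations are finite because square integrability of
  \<open>w\<^sub>t\<close> propagates along the iteration, again by independence of \<open>\<xi>\<^sub>t\<close> and \<open>w\<^sub>t\<close>.
\<close>

lemma bounded_bilinear_matrix_vector_mult:
  "bounded_bilinear ((*v) :: real^'n^'m \<Rightarrow> real^'n \<Rightarrow> real^'m)"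
  by (rule bilinear_conv_bounded_bilinear[THEN iffD1])
     (auto simp: bilinear_def intro!: linearI simp: matrix_vector_right_distrib
       matrix_vector_mult_add_rdistrib matrix_vector_mult_scaleR scaleR_matrix_vector_assoc)

lemma borel_measurable_matrix_vector_mult[measurable]:
  fixes f :: "'a \<Rightarrow> real^'n^'m" and g :: "'a \<Rightarrow> real^'n"
  assumes "f \<in> borel_measurable M" "g \<in> borel_measurable M"
  shows "(\<lambda>x. f x *v g x) \<in> borel_measurable M"
  using assms by (rule borel_measurable_continuous_Pair)
    (intro bounded_bilinear.continuous_on[OF bounded_bilinear_matrix_vector_mult] continuous_intros)

definition square_integrable :: "'a measure \<Rightarrow> ('a \<Rightarrow> 'b::real_normed_vector) \<Rightarrow> bool" where
  "square_integrable M f \<longleftrightarrow> f \<in> borel_measurable M \<and> integrable M (\<lambda>x. (norm (f x))\<^sup>2)"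

lemma square_integrableI_bound:
  assumes "f \<in> borel_measurable M" and "integrable M g"
    and "\<And>x. x \<in> space M \<Longrightarrow> (norm (f x))\<^sup>2 \<le> g x"
  shows "square_integrable M f"
  unfolding square_integrable_def
proof
  show "integrable M (\<lambda>x. (norm (f x))\<^sup>2)"
    using assms(1,3) by (intro Bochner_Integration.integrable_bound[OF assms(2)] AE_I2)
      (auto simp: borel_measurable_power borel_measurable_norm intro: abs_ge_self order_trans)
qed (rule assms)

lemma (in finite_measure) square_integrable_const: "square_integrable M (\<lambda>_. c)"
  by (simp add: square_integrable_def)

lemma square_integrable_bounded_linear:
  assumes L: "bounded_linear L" and f: "square_integrable M f"
  shows "square_integrable M (\<lambda>x. L (f x))"
proof -
  obtain K where K: "\<And>x. norm (L x) \<le> norm x * K" and "K > 0"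
    using bounded_linear.pos_bounded[OF L] by blast
  show ?thesis
  proof (rule square_integrableI_bound)
    show "(\<lambda>x. L (f x)) \<in> borel_measurable M"
      using f L by (simp add: square_integrable_def borel_measurable_continuous_on
          linear_continuous_on)
    show "integrable M (\<lambda>x. K\<^sup>2 * (norm (f x))\<^sup>2)"
      using f by (simp add: square_integrable_def)
    show "(norm (L (f x)))\<^sup>2 \<le> K\<^sup>2 * (norm (f x))\<^sup>2" for x
      using power_mono[OF K[of "f x"] norm_ge_zero] by (simp add: power_mult_distrib mult.commute)
  qed
qed

lemma square_integrable_add:
  fixes f g :: "'a \<Rightarrow> 'b::{real_normed_vector, second_countable_topology}"
  assumes f: "square_integrable M f" and g: "square_integrable M g"
  shows "square_integrable M (\<lambda>x. f x + g x)"
proof (rule square_integrableI_bound)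
  show "(\<lambda>x. f x + g x) \<in> borel_measurable M"
    using f g by (simp add: square_integrable_def borel_measurable_add)
  show "integrable M (\<lambda>x. 2 * (norm (f x))\<^sup>2 + 2 * (norm (g x))\<^sup>2)"
    using f g by (simp add: square_integrable_def)
  fix x
  have "(norm (f x + g x))\<^sup>2 \<le> (norm (f x) + norm (g x))\<^sup>2"
    by (simp add: norm_triangle_ineq power_mono)
  also have "\<dots> \<le> 2 * (norm (f x))\<^sup>2 + 2 * (norm (g x))\<^sup>2"
    using sum_squares_bound[of "norm (f x)" "norm (g x)"] by (simp add: power2_sum)
  finally show "(norm (f x + g x))\<^sup>2 \<le> 2 * (norm (f x))\<^sup>2 + 2 * (norm (g x))\<^sup>2" .
qed

lemma square_integrable_diff:
  fixes f g :: "'a \<Rightarrow> 'b::{real_normed_vector, second_countable_topology}"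
  assumes "square_integrable M f" and "square_integrable M g"
  shows "square_integrable M (\<lambda>x. f x - g x)"
  using square_integrable_add[OF assms(1)
      square_integrable_bounded_linear[OF bounded_linear_minus[OF bounded_linear_ident] assms(2)]]
  by simp

lemma integrable_inner_square_integrable:
  fixes f g :: "'a \<Rightarrow> 'b::{real_inner, second_countable_topology}"
  assumes f: "square_integrable M f" and g: "square_integrable M g"
  shows "integrable M (\<lambda>x. f x \<bullet> g x)"
proof (rule Bochner_Integration.integrable_bound)
  show "integrable M (\<lambda>x. (norm (f x))\<^sup>2 + (norm (g x))\<^sup>2)"
    using f g by (simp add: square_integrable_def)
  show "(\<lambda>x. f x \<bullet> g x) \<in> borel_measurable M"
    using f g by (simp add: square_integrable_def borel_measurable_inner)
  have "\<bar>f x \<bullet> g x\<bar> \<le> (norm (f x))\<^sup>2 + (norm (g x))\<^sup>2" for x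
    using Cauchy_Schwarz_ineq2[of "f x" "g x"] sum_squares_bound[of "norm (f x)" "norm (g x)"]
      mult_nonneg_nonneg[OF norm_ge_zero norm_ge_zero, of "f x" "g x"] by linarith
  then show "AE x in M. norm (f x \<bullet> g x) \<le> norm ((norm (f x))\<^sup>2 + (norm (g x))\<^sup>2)"
    by simp
qed

lemma (in finite_measure) integrable_square_integrable:
  fixes f :: "'a \<Rightarrow> 'b::{banach, second_countable_topology}"
  assumes "square_integrable M f"
  shows "integrable M f"
proof -
  have f: "f \<in> borel_measurable M" and f2: "integrable M (\<lambda>x. (norm (f x))\<^sup>2)"
    using assms by (simp_all add: square_integrable_def)
  have "integrable M (\<lambda>x. norm (f x))"
  proof (rule square_integrable_imp_integrable)
    show "(\<lambda>x. norm (f x)) \<in> borel_measurable M"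
      using f by measurable
  qed (simp add: f2)
  then show ?thesis
    using integrable_norm_iff[OF f] by blast
qed

lemma square_integrable_PiM_component:
  assumes "\<And>i. i \<in> I \<Longrightarrow> prob_space (M i)" and "i \<in> I" and f: "square_integrable (M i) f"
  shows "square_integrable (PiM I M) (\<lambda>x. f (x i))"
proof -
  have [measurable]: "f \<in> borel_measurable (M i)" "(\<lambda>x. x i) \<in> PiM I M \<rightarrow>\<^sub>M M i"
    using f \<open>i \<in> I\<close> by (simp_all add: square_integrable_def)
  have "integrable (distr (PiM I M) (M i) (\<lambda>x. x i)) (\<lambda>y. (norm (f y))\<^sup>2)"
    using f by (simp add: distr_PiM_component assms(1,2) square_integrable_def)
  then show ?thesis
    unfolding square_integrable_def by (subst (asm) integrable_distr_eq) simp_all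
qed

context prob_space
begin

lemma nn_integral_PiM_mult_coordinate:
  fixes h :: "('i \<Rightarrow> 'a) \<Rightarrow> ennreal" and k :: "'a \<Rightarrow> ennreal"
  assumes "finite I" and "i \<in> I"
    and h: "h \<in> borel_measurable (PiM I (\<lambda>_. M))" and h_indep: "\<And>x y. h (x(i := y)) = h x"
    and k: "k \<in> borel_measurable M"
  shows "(\<integral>\<^sup>+x. h x * k (x i) \<partial>PiM I (\<lambda>_. M)) = (\<integral>\<^sup>+x. h x \<partial>PiM I (\<lambda>_. M)) * (\<integral>\<^sup>+y. k y \<partial>M)"
proof -
  interpret product_sigma_finite "\<lambda>_. M"
    by (simp add: product_sigma_finite_def sigma_finite_measure_axioms)
  define J where "J = I - {i}"
  have I: "I = insert i J" and "finite J" "i \<notin> J"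
    using assms(1,2) by (auto simp: J_def)
  have h_J: "h \<in> borel_measurable (PiM J (\<lambda>_. M))"
  proof -
    obtain y where "y \<in> space M" using not_empty by blast
    then have "(\<lambda>x. x(i := y)) \<in> PiM J (\<lambda>_. M) \<rightarrow>\<^sub>M PiM I (\<lambda>_. M)"
      unfolding I by (intro measurable_fun_upd[where J=J]) auto
    from measurable_compose[OF this h] show ?thesis by (simp add: h_indep)
  qed
  have "(\<integral>\<^sup>+x. h x * k (x i) \<partial>PiM I (\<lambda>_. M)) = (\<integral>\<^sup>+x. h x * (\<integral>\<^sup>+y. k y \<partial>M) \<partial>PiM J (\<lambda>_. M))"
    unfolding I using \<open>finite J\<close> \<open>i \<notin> J\<close> h k
    by (subst product_nn_integral_insert) (simp_all add: I h_indep nn_integral_cmult)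
  also have "\<dots> = (\<integral>\<^sup>+x. h x \<partial>PiM J (\<lambda>_. M)) * (\<integral>\<^sup>+y. k y \<partial>M)"
    by (rule nn_integral_multc[OF h_J])
  also have "(\<integral>\<^sup>+x. h x \<partial>PiM J (\<lambda>_. M)) = (\<integral>\<^sup>+x. h x \<partial>PiM I (\<lambda>_. M))"
    unfolding I using \<open>finite J\<close> \<open>i \<notin> J\<close> h
    by (subst product_nn_integral_insert) (simp_all add: I h_indep emeasure_space_1)
  finally show ?thesis .
qed

lemma integrable_PiM_mult_coordinate:
  fixes h :: "('i \<Rightarrow> 'a) \<Rightarrow> real" and k :: "'a \<Rightarrow> real"
  assumes "finite I" and "i \<in> I"
    and h: "integrable (PiM I (\<lambda>_. M)) h" and h_indep: "\<And>x y. h (x(i := y)) = h x"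
    and k: "integrable M k"
  shows "integrable (PiM I (\<lambda>_. M)) (\<lambda>x. h x * k (x i))"
proof -
  have [measurable]: "h \<in> borel_measurable (PiM I (\<lambda>_. M))" "k \<in> borel_measurable M"
    "(\<lambda>x. x i) \<in> PiM I (\<lambda>_. M) \<rightarrow>\<^sub>M M"
    using h k \<open>i \<in> I\<close> by auto
  have "(\<integral>\<^sup>+x. ennreal (norm (h x * k (x i))) \<partial>PiM I (\<lambda>_. M))
      = (\<integral>\<^sup>+x. ennreal (norm (h x)) \<partial>PiM I (\<lambda>_. M)) * (\<integral>\<^sup>+y. ennreal (norm (k y)) \<partial>M)"
    using assms(1,2) h_indep
    by (simp add: abs_mult ennreal_mult nn_integral_PiM_mult_coordinate[symmetric])
  also have "\<dots> < \<infinity>"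
    using h k by (simp add: integrable_iff_bounded ennreal_mult_less_top)
  finally show ?thesis
    by (simp add: integrable_iff_bounded)
qed

lemma integral_PiM_eq_0_if_coordinate_integrals_0:
  fixes f :: "('i \<Rightarrow> 'a) \<Rightarrow> real"
  assumes "finite I" and "i \<in> I" and f: "integrable (PiM I (\<lambda>_. M)) f"
    and f_i: "\<And>x. (\<integral>y. f (x(i := y)) \<partial>M) = 0"
  shows "(\<integral>x. f x \<partial>PiM I (\<lambda>_. M)) = 0"
proof -
  interpret product_sigma_finite "\<lambda>_. M"
    by (simp add: product_sigma_finite_def sigma_finite_measure_axioms)
  have "I = insert i (I - {i})"
    using \<open>i \<in> I\<close> by blast
  then show ?thesis
    using product_integral_insert[of "I - {i}" i f] assms(1) f by (simp add: f_i)
qed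

end

lemma matrix_inv_right:
  fixes A :: "'a::field^'n^'n"
  assumes "invertible A"
  shows "A ** matrix_inv A = mat 1"
  using assms unfolding invertible_def matrix_inv_def by (rule someI2_ex) auto

lemma invertible_if_positive_definite:
  fixes A :: "real^'n^'n"
  assumes "\<And>v. v \<noteq> 0 \<Longrightarrow> v \<bullet> (A *v v) > 0"
  shows "invertible A"
proof -
  have "\<forall>x. A *v x = 0 \<longrightarrow> x = 0"
    using assms by (metis inner_zero_right less_irrefl)
  then show ?thesis
    by (simp add: invertible_left_inverse matrix_left_invertible_ker)
qed

lemma transpose_integral:
  fixes f :: "'a \<Rightarrow> real^'n^'m"
  assumes "integrable M f"
  shows "transpose (\<integral>x. f x \<partial>M) = (\<integral>x. transpose (f x) \<partial>M)"
proof -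
  have "linear (transpose :: real^'n^'m \<Rightarrow> real^'m^'n)"
    by (rule linearI) (simp_all add: transpose_def vec_eq_iff)
  then have "bounded_linear (transpose :: real^'n^'m \<Rightarrow> real^'m^'n)"
    by (rule linear_conv_bounded_linear[THEN iffD1])
  from integral_bounded_linear[OF this assms] show ?thesis ..
qed

lemma Pmat_mult_vector: "Pmat H eta t *v x = x - eta t *\<^sub>R (H *v x)"
  by (simp add: Pmat_def matrix_vector_mult_diff_rdistrib scaleR_matrix_vector_assoc)

lemma Pmat_mult_commute: "Pmat H eta i ** Pmat H eta j = Pmat H eta j ** Pmat H eta i"
  by (simp add: matrix_eq flip: matrix_vector_mul_assoc)
    (simp add: Pmat_mult_vector algebra_simps)

lemma Pmat_Pprod_commute: "Pmat H eta j ** Pprod H eta a n = Pprod H eta a n ** Pmat H eta j"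
proof (induction n)
  case (Suc n)
  have "Pmat H eta j ** Pprod H eta a (Suc n) = Pmat H eta (a + n) ** (Pmat H eta j ** Pprod H eta a n)"
    by (simp add: matrix_mul_assoc Pmat_mult_commute[of H eta j])
  also have "\<dots> = Pprod H eta a (Suc n) ** Pmat H eta j"
    by (simp add: Suc.IH matrix_mul_assoc)
  finally show ?case .
qed simp

lemma Pprod_rev_eq_Pprod: "Pprod_rev H eta a n = Pprod H eta a n"
  by (induction n) (simp_all add: Pmat_Pprod_commute)

lemma transpose_Pmat: "transpose (Pmat H eta t) = Pmat (transpose H) eta t"
  by (simp add: Pmat_def transpose_def vec_eq_iff mat_def)

lemma transpose_Pprod: "transpose (Pprod H eta a n) = Pprod_rev (transpose H) eta a n"
  by (induction n) (simp_all add: matrix_transpose_mul transpose_Pmat)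

lemma Pprod_Suc_left:
  assumes "\<tau> < s"
  shows "Pprod H eta (Suc \<tau>) (s - \<tau>) = Pmat H eta s ** Pprod H eta (Suc \<tau>) (s - Suc \<tau>)"
proof -
  have "s - \<tau> = Suc (s - Suc \<tau>)" and "Suc \<tau> + (s - Suc \<tau>) = s"
    using assms by simp_all
  then show ?thesis by simp
qed

lemma sgd_iter_fun_upd:
  "t \<le> s \<Longrightarrow> sgd_iter Hs bs eta w0 (x(s := y)) t = sgd_iter Hs bs eta w0 x t"
  by (induction t) auto

lemma noise_fun_upd:
  "noise Hs bs H b eta w0 (x(t := y)) t =
     (H *v sgd_iter Hs bs eta w0 x t - b) - (Hs y *v sgd_iter Hs bs eta w0 x t - bs y)"
  by (simp add: noise_def sgd_iter_fun_upd)

lemma sgd_iter_Suc_minus: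
  assumes "H *v wstar = b"
  shows "sgd_iter Hs bs eta w0 x (Suc t) - wstar =
    Pmat H eta t *v (sgd_iter Hs bs eta w0 x t - wstar) + eta t *\<^sub>R noise Hs bs H b eta w0 x t"
  using assms by (simp add: Pmat_mult_vector noise_def algebra_simps)

lemma inner_matrix_vector_transpose:
  fixes A :: "real^'n^'m"
  shows "(A *v x) \<bullet> y = x \<bullet> (transpose A *v y)"
  by (simp add: dot_lmul_matrix[symmetric] inner_commute)

lemma quadratic_form_affine:
  fixes P A :: "real^'n^'n"
  shows "(P *v e + c *\<^sub>R n) \<bullet> (A *v (P *v e + c *\<^sub>R n)) =
    e \<bullet> ((transpose P ** A ** P) *v e) + c * (n \<bullet> ((transpose A ** P + A ** P) *v e))
    + c\<^sup>2 * (n \<bullet> (A *v n))"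
proof -
  have "(P *v e) \<bullet> (A *v n) = (A *v n) \<bullet> (P *v e)"
    by (rule inner_commute)
  also have "\<dots> = n \<bullet> ((transpose A ** P) *v e)"
    by (simp add: inner_matrix_vector_transpose matrix_vector_mul_assoc)
  finally have "(P *v e) \<bullet> (A *v n) = n \<bullet> ((transpose A ** P) *v e)" .
  moreover have "(P *v e) \<bullet> (A *v (P *v e)) = e \<bullet> ((transpose P ** A ** P) *v e)"
    by (simp add: inner_matrix_vector_transpose matrix_vector_mul_assoc matrix_mul_assoc)
  ultimately show ?thesis
    by (simp add: inner_add_left inner_add_right matrix_vector_right_distrib
        matrix_vector_mult_add_rdistrib matrix_vector_mult_scaleR matrix_vector_mul_assoc
        power2_eq_square algebra_simps)
qed

locale sgd_quadratic = prob_space D for D :: "'s measure" +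
  fixes Hs :: "'s \<Rightarrow> real^'n^'n" and bs :: "'s \<Rightarrow> real^'n"
    and H :: "real^'n^'n" and b wstar :: "real^'n"
    and eta :: "nat \<Rightarrow> real" and w0 :: "real^'n" and T :: nat
  assumes square_integrable_Hs: "square_integrable D Hs"
    and square_integrable_bs: "square_integrable D bs"
    and H_eq: "H = (\<integral>y. Hs y \<partial>D)" and b_eq: "b = (\<integral>y. bs y \<partial>D)"
    and H_wstar: "H *v wstar = b"
begin

abbreviation paths :: "(nat \<Rightarrow> 's) measure" where
  "paths \<equiv> PiM {0..T} (\<lambda>_. D)"

abbreviation w :: "(nat \<Rightarrow> 's) \<Rightarrow> nat \<Rightarrow> real^'n" where
  "w x t \<equiv> sgd_iter Hs bs eta w0 x t"

abbreviation \<nu> :: "(nat \<Rightarrow> 's) \<Rightarrow> nat \<Rightarrow> real^'n" where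
  "\<nu> x t \<equiv> noise Hs bs H b eta w0 x t"

sublocale paths: prob_space paths
  by (rule prob_space_PiM) (rule prob_space_axioms)

lemma square_integrable_sample:
  "t \<le> T \<Longrightarrow> square_integrable D f \<Longrightarrow> square_integrable paths (\<lambda>x. f (x t))"
  by (rule square_integrable_PiM_component) (auto intro: prob_space_axioms)

text \<open>Independence enters here: \<open>w\<^sub>t\<close> is a function of the samples before time \<open>t\<close>.\<close>

lemma square_integrable_sample_mult:
  assumes "t \<le> T" and w: "square_integrable paths (\<lambda>x. w x t)"
  shows "square_integrable paths (\<lambda>x. Hs (x t) *v w x t)"
proof -
  obtain K where K: "\<And>(A :: real^'n^'n) v. norm (A *v v) \<le> norm A * norm v * K"
    using bounded_bilinear.pos_bounded[OF bounded_bilinear_matrix_vector_mult] by blast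
  have [measurable]: "Hs \<in> borel_measurable D" "(\<lambda>x. w x t) \<in> borel_measurable paths"
    "(\<lambda>x. x t) \<in> paths \<rightarrow>\<^sub>M D"
    using square_integrable_Hs w \<open>t \<le> T\<close> by (simp_all add: square_integrable_def)
  have "integrable paths (\<lambda>x. (norm (w x t))\<^sup>2 * (norm (Hs (x t)))\<^sup>2)"
    using square_integrable_Hs w
    by (intro integrable_PiM_mult_coordinate) (simp_all add: \<open>t \<le> T\<close> square_integrable_def sgd_iter_fun_upd)
  then have "integrable paths (\<lambda>x. K\<^sup>2 * ((norm (w x t))\<^sup>2 * (norm (Hs (x t)))\<^sup>2))"
    by (rule integrable_mult_right)
  then show ?thesis
  proof (rule square_integrableI_bound[rotated])
    show "(norm (Hs (x t) *v w x t))\<^sup>2 \<le> K\<^sup>2 * ((norm (w x t))\<^sup>2 * (norm (Hs (x t)))\<^sup>2)" for x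
      using power_mono[OF K[of "Hs (x t)" "w x t"] norm_ge_zero, of 2]
      by (simp add: power_mult_distrib mult_ac)
  qed measurable
qed

lemma square_integrable_sgd_iter: "t \<le> Suc T \<Longrightarrow> square_integrable paths (\<lambda>x. w x t)"
proof (induction t)
  case 0
  show ?case by (simp add: paths.square_integrable_const)
next
  case (Suc t)
  then have "t \<le> T" by simp
  have "square_integrable paths (\<lambda>x. w x t - eta t *\<^sub>R (Hs (x t) *v w x t - bs (x t)))"
    using Suc \<open>t \<le> T\<close> square_integrable_bs
    by (intro square_integrable_diff square_integrable_bounded_linear[OF bounded_linear_scaleR_right]
        square_integrable_sample_mult square_integrable_sample) simp_all
  then show ?case by simp
qed

lemma square_integrable_noise: "t \<le> T \<Longrightarrow> square_integrable paths (\<lambda>x. \<nu> x t)"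
  unfolding noise_def
  by (intro square_integrable_diff square_integrable_bounded_linear[OF matrix_vector_mul_bounded_linear]
      square_integrable_sample_mult square_integrable_sample square_integrable_sgd_iter
      paths.square_integrable_const square_integrable_bs) simp_all

lemma integral_sample_gradient:
  "integrable D (\<lambda>y. Hs y *v v - bs y)" "(\<integral>y. Hs y *v v - bs y \<partial>D) = H *v v - b"
proof -
  have L: "bounded_linear (\<lambda>A::real^'n^'n. A *v v)"
    by (rule bounded_bilinear.bounded_linear_left[OF bounded_bilinear_matrix_vector_mult])
  have Hs: "integrable D Hs" and bs: "integrable D bs"
    using square_integrable_Hs square_integrable_bs by (simp_all add: integrable_square_integrable)
  have Hs_v: "integrable D (\<lambda>y. Hs y *v v)"
    by (rule integrable_bounded_linear[OF L Hs])
  show "integrable D (\<lambda>y. Hs y *v v - bs y)"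
    by (rule Bochner_Integration.integrable_diff[OF Hs_v bs])
  show "(\<integral>y. Hs y *v v - bs y \<partial>D) = H *v v - b"
    using integral_bounded_linear[OF L Hs]
    by (simp add: Bochner_Integration.integral_diff[OF Hs_v bs] H_eq b_eq)
qed

text \<open>Integrate out the \<open>t\<close>-th sample first: \<open>w\<^sub>t\<close> and \<open>f\<close> do not depend on it,
  and the noise then averages to zero.\<close>

lemma integral_noise_inner_eq_0:
  assumes "t \<le> T" and f: "square_integrable paths f" and f_indep: "\<And>x y. f (x(t := y)) = f x"
  shows "(\<integral>x. \<nu> x t \<bullet> f x \<partial>paths) = 0"
proof (rule integral_PiM_eq_0_if_coordinate_integrals_0)
  show "integrable paths (\<lambda>x. \<nu> x t \<bullet> f x)"
    by (rule integrable_inner_square_integrable[OF square_integrable_noise[OF \<open>t \<le> T\<close>] f])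
  fix x
  have "(\<integral>y. \<nu> (x(t := y)) t \<bullet> f (x(t := y)) \<partial>D) =
      (\<integral>y. ((H *v w x t - b) - (Hs y *v w x t - bs y)) \<bullet> f x \<partial>D)"
    by (simp add: noise_fun_upd f_indep)
  also have "\<dots> = (\<integral>y. (H *v w x t - b) - (Hs y *v w x t - bs y) \<partial>D) \<bullet> f x"
    using integral_sample_gradient(1) by simp
  also have "\<dots> = 0"
    using integral_sample_gradient by (simp add: prob_space)
  finally show "(\<integral>y. \<nu> (x(t := y)) t \<bullet> f (x(t := y)) \<partial>D) = 0" .
qed (use \<open>t \<le> T\<close> in simp_all)

lemma expected_quadratic_step:
  fixes A :: "real^'n^'n"
  assumes "t \<le> T"
  shows "(\<integral>x. (w x (Suc t) - wstar) \<bullet> (A *v (w x (Suc t) - wstar)) \<partial>paths) =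
    (\<integral>x. (w x t - wstar) \<bullet> ((transpose (Pmat H eta t) ** A ** Pmat H eta t) *v (w x t - wstar)) \<partial>paths)
    + (\<integral>x. (eta t)\<^sup>2 * (\<nu> x t \<bullet> (A *v \<nu> x t)) \<partial>paths)"
proof -
  define P where "P = Pmat H eta t"
  define B where "B = transpose A ** P + A ** P"
  have e: "square_integrable paths (\<lambda>x. w x t - wstar)"
    using assms by (intro square_integrable_diff square_integrable_sgd_iter paths.square_integrable_const) simp
  have \<nu>: "square_integrable paths (\<lambda>x. \<nu> x t)"
    using assms by (rule square_integrable_noise)
  have quadratic: "integrable paths (\<lambda>x. u x \<bullet> (M *v v x))"
    if "square_integrable paths u" "square_integrable paths v" for u v and M :: "real^'n^'n"
    using that(1) square_integrable_bounded_linear[OF matrix_vector_mul_bounded_linear that(2)]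
    by (rule integrable_inner_square_integrable)
  have cross: "(\<integral>x. \<nu> x t \<bullet> (B *v (w x t - wstar)) \<partial>paths) = 0"
    using square_integrable_bounded_linear[OF matrix_vector_mul_bounded_linear e]
    by (rule integral_noise_inner_eq_0[OF assms]) (simp add: sgd_iter_fun_upd)
  define f where "f = (\<lambda>x. (w x t - wstar) \<bullet> ((transpose P ** A ** P) *v (w x t - wstar)))"
  define g where "g = (\<lambda>x. \<nu> x t \<bullet> (B *v (w x t - wstar)))"
  define h where "h = (\<lambda>x. (eta t)\<^sup>2 * (\<nu> x t \<bullet> (A *v \<nu> x t)))"
  have "(w x (Suc t) - wstar) \<bullet> (A *v (w x (Suc t) - wstar)) = f x + eta t * g x + h x" for x
    by (simp only: sgd_iter_Suc_minus[OF H_wstar] quadratic_form_affine f_def g_def h_def P_def B_def)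
  then have "(\<integral>x. (w x (Suc t) - wstar) \<bullet> (A *v (w x (Suc t) - wstar)) \<partial>paths)
      = (\<integral>x. f x + eta t * g x + h x \<partial>paths)"
    by (simp only:)
  also have "\<dots> = integral\<^sup>L paths f + eta t * integral\<^sup>L paths g + integral\<^sup>L paths h"
    using quadratic[OF e e] quadratic[OF \<nu> e] quadratic[OF \<nu> \<nu>]
    unfolding f_def g_def h_def by simp
  also have "\<dots> = integral\<^sup>L paths f + integral\<^sup>L paths h"
    using cross by (simp add: g_def)
  finally show ?thesis
    by (simp only: f_def h_def P_def)
qed

text \<open>Generalising over the weight matrix \<open>A\<close> makes the induction work: one SGD step
  replaces \<open>A\<close> by \<open>P\<^sub>t\<^sup>T A P\<^sub>t\<close>.\<close>

lemma expected_quadratic_sgd_iter: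
  fixes A :: "real^'n^'n"
  assumes "s \<le> Suc T"
  shows "(\<integral>x. (w x s - wstar) \<bullet> (A *v (w x s - wstar)) \<partial>paths) =
    (w0 - wstar) \<bullet> ((transpose (Pprod H eta 0 s) ** A ** Pprod H eta 0 s) *v (w0 - wstar))
    + (\<Sum>\<tau><s. \<integral>x. (eta \<tau>)\<^sup>2 * (\<nu> x \<tau> \<bullet> ((transpose (Pprod H eta (Suc \<tau>) (s - Suc \<tau>)) ** A
        ** Pprod H eta (Suc \<tau>) (s - Suc \<tau>)) *v \<nu> x \<tau>)) \<partial>paths)"
  using assms
proof (induction s arbitrary: A)
  case 0
  then show ?case by (simp add: paths.prob_space)
next
  case (Suc s)
  then have "s \<le> T" by simp
  let ?P = "Pmat H eta s"
  have congr: "transpose (Pprod H eta (Suc \<tau>) (s - Suc \<tau>)) ** transpose ?P ** A ** ?P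
      ** Pprod H eta (Suc \<tau>) (s - Suc \<tau>)
    = transpose (Pprod H eta (Suc \<tau>) (s - \<tau>)) ** A ** Pprod H eta (Suc \<tau>) (s - \<tau>)"
    if "\<tau> < s" for \<tau>
    using that by (simp add: Pprod_Suc_left matrix_transpose_mul matrix_mul_assoc)
  have "(\<integral>x. (w x (Suc s) - wstar) \<bullet> (A *v (w x (Suc s) - wstar)) \<partial>paths) =
    (\<integral>x. (w x s - wstar) \<bullet> ((transpose ?P ** A ** ?P) *v (w x s - wstar)) \<partial>paths)
    + (\<integral>x. (eta s)\<^sup>2 * (\<nu> x s \<bullet> (A *v \<nu> x s)) \<partial>paths)"
    by (rule expected_quadratic_step[OF \<open>s \<le> T\<close>])
  then show ?case
    using Suc.IH[of "transpose ?P ** A ** ?P"] \<open>s \<le> T\<close>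
    by (simp add: congr matrix_transpose_mul matrix_mul_assoc)
qed

end

theorem lemma4:
  fixes D :: "'s measure"
    and Hs :: "'s \<Rightarrow> real^'n^'n" and bs :: "'s \<Rightarrow> real^'n"
    and H :: "real^'n^'n" and b :: "real^'n" and wstar :: "real^'n"
    and eta :: "nat \<Rightarrow> real" and w0 :: "real^'n" and T :: nat
  assumes "prob_space D"
    and "Hs \<in> borel_measurable D" and "bs \<in> borel_measurable D"
    and "integrable D (\<lambda>x. (norm (Hs x))\<^sup>2)"
    and "integrable D (\<lambda>x. (norm (bs x))\<^sup>2)"
    and "\<And>x. transpose (Hs x) = Hs x"
    and "H = (\<integral>x. Hs x \<partial>D)" and "b = (\<integral>x. bs x \<partial>D)"
    and "\<And>v. v \<noteq> 0 \<Longrightarrow> v \<bullet> (H *v v) > 0"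
    and "wstar = matrix_inv H *v b"
  shows
   "(\<integral>\<omega>. (sgd_iter Hs bs eta w0 \<omega> (Suc T) - wstar) \<bullet>
          (H *v (sgd_iter Hs bs eta w0 \<omega> (Suc T) - wstar)) \<partial>(PiM {0..T} (\<lambda>_. D)))
    = (\<integral>\<omega>. (w0 - wstar) \<bullet>
          ((Pprod H eta 0 (Suc T) ** H ** Pprod_rev H eta 0 (Suc T)) *v (w0 - wstar))
          \<partial>(PiM {0..T} (\<lambda>_. D)))
      + (\<Sum>\<tau> = 0..T. \<integral>\<omega>. (eta \<tau>)\<^sup>2 * (noise Hs bs H b eta w0 \<omega> \<tau> \<bullet>
          ((Pprod H eta (Suc \<tau>) (T - \<tau>) ** H ** Pprod_rev H eta (Suc \<tau>) (T - \<tau>))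
             *v noise Hs bs H b eta w0 \<omega> \<tau>)) \<partial>(PiM {0..T} (\<lambda>_. D)))"
proof -
  interpret D: prob_space D by fact
  have H_wstar: "H *v wstar = b"
    using matrix_inv_right[OF invertible_if_positive_definite[OF assms(9)]] assms(10)
    by (simp add: matrix_vector_mul_assoc)
  have Hs: "square_integrable D Hs" and bs: "square_integrable D bs"
    using assms(2-5) by (simp_all add: square_integrable_def)
  interpret sgd_quadratic D Hs bs H b wstar eta w0 T
    by unfold_locales (fact Hs bs assms(7,8) H_wstar)+
  have "transpose H = H"
    using transpose_integral[OF D.integrable_square_integrable[OF Hs]] assms(6,7) by simp
  then have Pprod_symmetric: "transpose (Pprod H eta a n) = Pprod H eta a n" for a n
    by (simp add: transpose_Pprod Pprod_rev_eq_Pprod)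
  have sum_index: "(\<Sum>\<tau><Suc T. f \<tau>) = (\<Sum>\<tau> = 0..T. f \<tau>)" for f :: "nat \<Rightarrow> real"
    by (simp add: atLeast0AtMost lessThan_Suc_atMost)
  show ?thesis
    using expected_quadratic_sgd_iter[of "Suc T" H]
    unfolding Pprod_symmetric Pprod_rev_eq_Pprod sum_index diff_Suc_Suc
    by (simp add: paths.prob_space)
qed

end
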